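(* For every integer $N\ge16$ there is $C<\infty$ such that: (a) for every interval $Q$, $\int_Q M(\mathbf 1_Q\widehat{\dot\sigma})^2\,d\widehat\omega\le C\,\widehat{\dot\sigma}(Q)$, where $M\mu(x)=\sup_{J\ni x}\mu(J)/|J|$ (sup over intervals $J$ containing $x$); and (b) for every interval $I_0$ and every decomposition $I_0=\bigcup_{r\ge1}I_r$ into pairwise disjoint intervals, $\sum_{r\ge1}\widehat\omega(I_r)\,\mathrm P(I_r,\mathbf 1_{I_0}\widehat{\dot\sigma})^2\le C\,\widehat{\dot\sigma}(I_0)$.
   Context: $\mathrm P(I,\mu)=\int_{\mathbb R}\frac{|I|}{(|I|+\operatorname{dist}(x,I))^2}\,d\mu(x)$. Cantor intervals: fix an integer $N\ge16$. Set $I^0_1=[0,1]$. Each interval $I=[a,a+N^{-k}]$ of generation $k$ has two children of generation $k+1$: the left child $I_-=[a,a+N^{-k-1}]$ and the right child $I_+=[a+N^{-k}-N^{-k-1},a+N^{-k}]$. The $2^k$ intervals of generation $k$ are denoted $I^k_j$, $1\le j\le 2^k$, numbered left to right; $\mathcal D$ is the collection of all of them. $\dot z^k_j$ is the center of $I^k_j$. The Cantor set is $\mathsf E^{(N)}=\bigcap_{k}\bigcup_{j}I^k_j$. Redistributed Cantor measure: with $\eta=1/N$, $\widehat\omega$ is the unique Borel probability measure supported on $\mathsf E^{(N)}$ such that $\widehat\omega(I^1_1)=\widehat\omega(I^1_2)=\frac12$ and for every $I\in\mathcal D$ of generation $\ge1$: if $I$ is the left child of its parent then $\widehat\omega(I_-)=\frac{1+\eta}2\widehat\omega(I)$,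 $\widehat\omega(I_+)=\frac{1-\eta}2\widehat\omega(I)$; if $I$ is the right child of its parent then $\widehat\omega(I_-)=\frac{1-\eta}2\widehat\omega(I)$, $\widehat\omega(I_+)=\frac{1+\eta}2\widehat\omega(I)$. Weights: $\widehat s^k_j=N^{-2k}/\widehat\omega(I^k_j)$; $\widehat{\dot\sigma}=\sum_{k\ge0}\sum_{j=1}^{2^k}\widehat s^k_j\,\delta_{\dot z^k_j}$. *)

theory Defs
  imports "HOL-Analysis.Analysis"
begin

section \<open>Cantor intervals (generation k, index j with 0 \<le> j < 2^k, numbered left to right)\<close>

text \<open>Left endpoint of the interval of generation k with (0-based) index j.
  The children of (k,j) are (k+1,2j) (left child) and (k+1,2j+1) (right child).\<close>
fun cleft :: "nat \<Rightarrow> nat \<Rightarrow> nat \<Rightarrow> real" where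
  "cleft N 0 j = 0"
| "cleft N (Suc k) j =
     cleft N k (j div 2) + (if odd j then 1 / real N ^ k - 1 / real N ^ Suc k else 0)"

definition cint :: "nat \<Rightarrow> nat \<Rightarrow> nat \<Rightarrow> real set" where
  "cint N k j = {cleft N k j .. cleft N k j + 1 / real N ^ k}"

definition ccenter :: "nat \<Rightarrow> nat \<Rightarrow> nat \<Rightarrow> real" where
  "ccenter N k j = cleft N k j + 1 / (2 * real N ^ k)"

definition cidx :: "(nat \<times> nat) set" where
  "cidx = {(k, j). j < 2 ^ k}"

definition cantor_set :: "nat \<Rightarrow> real set" where
  "cantor_set N = (\<Inter>k. \<Union>j\<in>{..<2 ^ k}. cint N k j)"

definition redist_cantor :: "nat \<Rightarrow> real measure \<Rightarrow> bool" where
  "redist_cantor N W \<longleftrightarrow>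
     sets W = sets borel \<and> emeasure W UNIV = 1 \<and>
     emeasure W (UNIV - cantor_set N) = 0 \<and>
     measure W (cint N 1 0) = 1/2 \<and> measure W (cint N 1 1) = 1/2 \<and>
     (\<forall>k\<ge>1. \<forall>j<2 ^ k.
        (even j \<longrightarrow>
           measure W (cint N (Suc k) (2*j)) = (1 + 1/real N) / 2 * measure W (cint N k j) \<and>
           measure W (cint N (Suc k) (2*j+1)) = (1 - 1/real N) / 2 * measure W (cint N k j)) \<and>
        (odd j \<longrightarrow>
           measure W (cint N (Suc k) (2*j)) = (1 - 1/real N) / 2 * measure W (cint N k j) \<and>
           measure W (cint N (Suc k) (2*j+1)) = (1 + 1/real N) / 2 * measure W (cint N k j)))"

section \<open>The weighted measure sigma-dot (sum of point masses at the centers)\<close>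

definition sweight :: "nat \<Rightarrow> real measure \<Rightarrow> nat \<Rightarrow> nat \<Rightarrow> real" where
  "sweight N W k j = (1 / real N ^ (2 * k)) / measure W (cint N k j)"

definition sdot :: "nat \<Rightarrow> real measure \<Rightarrow> real measure" where
  "sdot N W = density (count_space UNIV)
      (\<lambda>x. infsum (\<lambda>(k, j). ennreal (sweight N W k j))
                  {(k, j) \<in> cidx. ccenter N k j = x})"

definition interval :: "real set \<Rightarrow> bool" where
  "interval J \<longleftrightarrow> is_interval J \<and> bounded J"

definition ilen :: "real set \<Rightarrow> real" where
  "ilen J = (if J = {} then 0 else Sup J - Inf J)"

definition restr :: "real measure \<Rightarrow> real set \<Rightarrow> real measure" where
  "restr \<mu> Q = density \<mu> (indicator Q)"

definition maxfn :: "real measure \<Rightarrow> real \<Rightarrow> ennreal" where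
  "maxfn \<mu> x = (SUP J \<in> {J. interval J \<and> x \<in> J \<and> ilen J > 0}. emeasure \<mu> J / ennreal (ilen J))"

definition poisson :: "real set \<Rightarrow> real measure \<Rightarrow> ennreal" where
  "poisson I \<mu> = (\<integral>\<^sup>+ x. ennreal (ilen I / (ilen I + infdist x I)\<^sup>2) \<partial>\<mu>)"

end

theory Submission
  imports Defs
begin

text \<open>
  For \<open>x\<close> in the Cantor set both the maximal function and the Poisson integral of
  \<open>1\<^sub>Q \<sigma>\<close> are dominated by the potential \<open>T x = \<Sum> s\<^sub>k\<^sub>j 1\<^sub>Q(z\<^sub>k\<^sub>j) / \<bar>x - z\<^sub>k\<^sub>j\<bar>\<close>
  (\<open>potential\<close>).  Group the centres \<open>z\<^sub>k\<^sub>j\<close> by the generation \<open>m\<close> at which the ancestry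
  of \<open>I\<^sub>k\<^sub>j\<close> leaves the chain \<open>I\<^sub>m(x)\<close> of Cantor intervals containing \<open>x\<close>: such centres
  lie at distance \<open>\<ge> (1/2 - 1/N) N\<^sup>-\<^sup>m\<close> from \<open>x\<close>, on the far side of the centre of \<open>I\<^sub>m(x)\<close>,
  and their total weight decays geometrically in \<open>k - m\<close>.  Hence the group of generation
  \<open>m\<close> contributes at most \<open>3 a\<^sub>m(x)\<close>, where \<open>a\<^sub>m(x) = \<bar>I\<^sub>m(x)\<bar> / \<omega>(I\<^sub>m(x))\<close> (\<open>inv_density\<close>),
  and only if the centre of \<open>I\<^sub>m(x)\<close> lies in \<open>Q\<close>.  Since \<open>a\<^sub>m(x)\<close> decreases by a factor
  \<open>2/15\<close> per generation, \<open>T x \<le> 4 a\<^sub>m\<^sub>0(x)\<close> for the first such \<open>m\<^sub>0\<close>, and \<open>a\<^sub>m\<^sub>0(x)\<^sup>2\<close> is one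
  term of \<open>B x = \<Sum> a\<^sub>k\<^sub>j\<^sup>2 1\<^sub>Q(z\<^sub>k\<^sub>j) 1\<^sub>I\<^sub>k\<^sub>j(x)\<close> (\<open>square_fn\<close>), whose \<open>\<omega>\<close>-integral is exactly
  \<open>\<sigma>(Q)\<close>.  So \<open>T\<^sup>2 \<le> 16 B\<close> pointwise, which gives both inequalities with \<open>C = 16\<close>.
\<close>

lemma suminf_comm_ennreal:
  fixes f :: "nat \<Rightarrow> nat \<Rightarrow> ennreal"
  shows "(\<Sum>i. \<Sum>j. f i j) = (\<Sum>j. \<Sum>i. f i j)"
proof -
  have "(\<Sum>i. \<Sum>j. f i j) = (\<integral>\<^sup>+i. \<integral>\<^sup>+j. f i j \<partial>count_space UNIV \<partial>count_space UNIV)"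
    by (simp add: nn_integral_count_space_nat)
  also have "\<dots> = (\<integral>\<^sup>+j. \<integral>\<^sup>+i. f i j \<partial>count_space UNIV \<partial>count_space UNIV)"
    by (rule nn_integral_count_space_nn_integral) auto
  also have "\<dots> = (\<Sum>j. \<Sum>i. f i j)"
    by (simp add: nn_integral_count_space_nat)
  finally show ?thesis .
qed

lemma suminf_geometric_ennreal:
  fixes V r :: real
  assumes "0 \<le> V" "0 \<le> r" "r < 1"
  shows "(\<Sum>d. ennreal (V * r ^ d)) = ennreal (V / (1 - r))"
proof -
  have s: "summable (\<lambda>d. r ^ d)" using assms by (intro summable_geometric) simp
  have "(\<Sum>d. ennreal (V * r ^ d)) = ennreal (\<Sum>d. V * r ^ d)"
    using assms s by (intro suminf_ennreal2 summable_mult) auto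
  also have "(\<Sum>d. V * r ^ d) = V / (1 - r)"
    using suminf_mult[OF s, of V] suminf_geometric[of r] assms by simp
  finally show ?thesis .
qed

lemma suminf_shift_ennreal:
  fixes f :: "nat \<Rightarrow> ennreal"
  assumes "\<And>k. k < m \<Longrightarrow> f k = 0"
  shows "(\<Sum>k. f k) = (\<Sum>d. f (d + m))"
  using suminf_offset[OF summableI, of f m] assms by simp

lemma sum_divide_ennreal: "(\<Sum>i\<in>A. f i) / (c::ennreal) = (\<Sum>i\<in>A. f i / c)"
  unfolding divide_ennreal_def by (simp add: sum_distrib_right)

lemma card_div_fiber_le: "card {j::nat. j < 2 ^ (m + d) \<and> j div 2 ^ d = P} \<le> 2 ^ d"
proof -
  have "{j. j < 2 ^ (m + d) \<and> j div 2 ^ d = P} \<subseteq> {P * 2 ^ d ..< P * 2 ^ d + 2 ^ d}"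
  proof
    fix j assume "j \<in> {j. j < 2 ^ (m + d) \<and> j div 2 ^ d = P}"
    then have "j = P * 2 ^ d + j mod 2 ^ d"
      using div_mult_mod_eq[of j "2 ^ d"] by (simp add: mult.commute)
    moreover have "j mod 2 ^ d < (2::nat) ^ d" by simp
    ultimately show "j \<in> {P * 2 ^ d ..< P * 2 ^ d + 2 ^ d}"
      unfolding atLeastLessThan_iff by linarith
  qed
  then have "card {j. j < 2 ^ (m + d) \<and> j div 2 ^ d = P} \<le> card {P * 2 ^ d ..< P * 2 ^ d + (2::nat) ^ d}"
    by (intro card_mono) auto
  then show ?thesis by simp
qed

lemma div_pow2_less: "(j::nat) < 2 ^ (m + d) \<Longrightarrow> j div 2 ^ d < 2 ^ m"
  by (simp add: less_mult_imp_div_less power_add)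

lemma parity_cases: "(j::nat) = 2 * (j div 2) \<or> j = 2 * (j div 2) + 1"
  by presburger

lemma dist_le_ilen:
  assumes "interval J" "x \<in> J" "y \<in> J"
  shows "\<bar>x - y\<bar> \<le> ilen J"
proof -
  have "bdd_above J" "bdd_below J" using assms(1) unfolding interval_def
    by (auto intro: bounded_imp_bdd_above bounded_imp_bdd_below)
  then have "x \<le> Sup J" "y \<le> Sup J" "Inf J \<le> x" "Inf J \<le> y"
    using assms(2,3) by (auto intro: cSup_upper cInf_lower)
  then show ?thesis unfolding ilen_def using assms(2) by auto
qed

lemma dist_le_ilen_plus_infdist:
  assumes "interval I" "x \<in> I"
  shows "\<bar>x - c\<bar> \<le> ilen I + infdist c I"
proof -
  have "\<bar>x - c\<bar> - ilen I \<le> dist c a" if "a \<in> I" for a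
    using dist_le_ilen[OF assms that] unfolding dist_real_def by linarith
  moreover have "I \<noteq> {}" using assms(2) by auto
  ultimately have "\<bar>x - c\<bar> - ilen I \<le> infdist c I"
    by (simp add: infdist_notempty cINF_greatest)
  then show ?thesis by simp
qed

lemma poisson_kernel_le_inverse_dist:
  assumes "interval I" "x \<in> I" "x \<noteq> c"
  shows "ilen I / (ilen I + infdist c I)\<^sup>2 \<le> 1 / \<bar>x - c\<bar>"
proof -
  define L e where "L = ilen I" and "e = infdist c I"
  have "L \<ge> 0" using dist_le_ilen[OF assms(1,2,2)] by (simp add: L_def)
  moreover have "e \<ge> 0" unfolding e_def by (rule infdist_nonneg)
  moreover have xc: "\<bar>x - c\<bar> \<le> L + e"
    unfolding L_def e_def by (rule dist_le_ilen_plus_infdist[OF assms(1,2)])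
  ultimately have "L / (L + e)\<^sup>2 \<le> (L + e) / (L + e)\<^sup>2"
    by (intro divide_right_mono) auto
  also have "\<dots> = 1 / (L + e)" by (simp add: power2_eq_square)
  also have "\<dots> \<le> 1 / \<bar>x - c\<bar>" using xc assms(3) by (intro divide_left_mono) auto
  finally show ?thesis unfolding L_def e_def .
qed

lemma sum_set_nn_integral_disjoint_le:
  assumes "finite F" "disjoint_family_on I F" "\<And>r. r \<in> F \<Longrightarrow> I r \<in> sets M"
    and "g \<in> borel_measurable M"
  shows "(\<Sum>r\<in>F. \<integral>\<^sup>+ x \<in> I r. g x \<partial>M) \<le> (\<integral>\<^sup>+ x. g x \<partial>M)"
proof -
  have "(\<Sum>r\<in>F. \<integral>\<^sup>+ x \<in> I r. g x \<partial>M) = (\<integral>\<^sup>+ x. (\<Sum>r\<in>F. g x * indicator (I r) x) \<partial>M)"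
    using assms(3,4) by (intro nn_integral_sum[symmetric]) auto
  also have "\<dots> = (\<integral>\<^sup>+ x. g x * indicator (\<Union>(I ` F)) x \<partial>M)"
    using assms(1,2) by (simp add: indicator_UN_disjoint sum_distrib_left)
  also have "\<dots> \<le> (\<integral>\<^sup>+ x. g x \<partial>M)"
    by (intro nn_integral_mono) (simp add: indicator_def)
  finally show ?thesis .
qed

locale cantor_geometry =
  fixes N :: nat
  assumes N_ge_16: "16 \<le> N"
begin

lemma real_N_ge: "real N \<ge> 16" using N_ge_16 by simp

lemma inverse_pow_N_pos: "(1::real) / real N ^ k > 0" using N_ge_16 by simp

lemma cint_child_subset: "cint N (Suc k) j \<subseteq> cint N k (j div 2)"
proof -
  have "1 / real N ^ Suc k \<le> 1 / real N ^ k" "1 / real N ^ Suc k > 0"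
    using real_N_ge by (auto simp: divide_simps)
  then show ?thesis unfolding cint_def by (auto simp: algebra_simps)
qed

lemma cint_descendant_subset: "cint N (m + d) j \<subseteq> cint N m (j div 2 ^ d)"
proof (induction d arbitrary: j)
  case (Suc d)
  have "cint N (m + Suc d) j \<subseteq> cint N (m + d) (j div 2)" using cint_child_subset[of "m + d" j] by simp
  also have "\<dots> \<subseteq> cint N m (j div 2 div 2 ^ d)" by (rule Suc.IH)
  finally show ?case by (simp add: div_mult2_eq mult.commute)
qed simp

lemma ccenter_in_cint: "ccenter N k j \<in> cint N k j"
  using inverse_pow_N_pos[of k] unfolding cint_def ccenter_def by (auto simp: divide_simps)

definition gap :: "nat \<Rightarrow> real" where "gap k = (1/2 - 1 / real N) / real N ^ k"

lemma gap_pos: "gap k > 0" using real_N_ge unfolding gap_def by (auto simp: divide_simps)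

lemma cint_child_eq:
  "cint N (Suc k) (2 * j) = {cleft N k j .. cleft N k j + 1 / real N ^ k / real N}"
  "cint N (Suc k) (2 * j + 1) = {cleft N k j + 1 / real N ^ k - 1 / real N ^ k / real N .. cleft N k j + 1 / real N ^ k}"
  unfolding cint_def by (simp_all add: mult.commute)

lemma ccenter_gap: "ccenter N k j = cleft N k j + 1 / real N ^ k / real N + gap k"
  unfolding gap_def ccenter_def using real_N_ge by (simp add: field_simps)

lemma left_child_gap:
  assumes "y \<in> cint N (Suc k) (2 * j)" shows "y + gap k \<le> ccenter N k j"
  using assms unfolding cint_child_eq ccenter_gap by simp

lemma right_child_gap:
  assumes "y \<in> cint N (Suc k) (2 * j + 1)" shows "ccenter N k j + gap k \<le> y"
proof -
  have "ccenter N k j + gap k = cleft N k j + 1 / real N ^ k - 1 / real N ^ k / real N"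
    unfolding gap_def ccenter_def using real_N_ge by (simp add: field_simps)
  then show ?thesis using assms unfolding cint_child_eq by simp
qed

lemma children_separation:
  assumes "y \<in> cint N (Suc k) j" "z \<in> cint N (Suc k) j'" "j div 2 = j' div 2" "j \<noteq> j'"
  shows "(y + gap k \<le> ccenter N k (j div 2) \<and> ccenter N k (j div 2) + gap k \<le> z) \<or>
         (z + gap k \<le> ccenter N k (j div 2) \<and> ccenter N k (j div 2) + gap k \<le> y)"
proof -
  define p where "p = j div 2"
  have "j = 2 * p \<and> j' = 2 * p + 1 \<or> j = 2 * p + 1 \<and> j' = 2 * p"
    using assms(3,4) parity_cases[of j] parity_cases[of j'] unfolding p_def by auto
  then show ?thesis
    using left_child_gap[of y k p] right_child_gap[of z k p] left_child_gap[of z k p] right_child_gap[of y k p]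
      assms(1,2) unfolding p_def[symmetric] by auto
qed

lemma cint_disjoint:
  "j < 2 ^ k \<Longrightarrow> j' < 2 ^ k \<Longrightarrow> j \<noteq> j' \<Longrightarrow> cint N k j \<inter> cint N k j' = {}"
proof (induction k arbitrary: j j')
  case (Suc k)
  show ?case
  proof (cases "j div 2 = j' div 2")
    case True
    then show ?thesis using children_separation[OF _ _ True Suc.prems(3)] gap_pos[of k] by force
  next
    case False
    have "j div 2 < 2 ^ k" "j' div 2 < 2 ^ k" using Suc.prems by auto
    then have "cint N k (j div 2) \<inter> cint N k (j' div 2) = {}" using Suc.IH False by blast
    then show ?thesis using cint_child_subset[of k j] cint_child_subset[of k j'] by blast
  qed
qed simp

text \<open>\<open>addr k x\<close> is the index of the Cantor interval of generation \<open>k\<close> containing \<open>x\<close>;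
  it is meaningful only for \<open>x \<in> cantor_set N\<close>.\<close>
definition addr :: "nat \<Rightarrow> real \<Rightarrow> nat" where
  "addr k x = (THE j. j < 2 ^ k \<and> x \<in> cint N k j)"

lemma addr_unique: "j < 2 ^ k \<Longrightarrow> x \<in> cint N k j \<Longrightarrow> addr k x = j"
  unfolding addr_def by (rule the_equality) (use cint_disjoint in blast)+

lemma
  assumes "x \<in> cantor_set N"
  shows addr_less: "addr k x < 2 ^ k" and mem_cint_addr: "x \<in> cint N k (addr k x)"
proof -
  obtain j where "j < 2 ^ k" "x \<in> cint N k j" using assms unfolding cantor_set_def by blast
  then show "addr k x < 2 ^ k" "x \<in> cint N k (addr k x)" using addr_unique by auto
qed

lemma addr_div_pow2:
  assumes "x \<in> cantor_set N" shows "addr (m + d) x div 2 ^ d = addr m x"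
proof (rule addr_unique[symmetric])
  show "addr (m + d) x div 2 ^ d < 2 ^ m" using addr_less[OF assms] by (rule div_pow2_less)
  show "x \<in> cint N m (addr (m + d) x div 2 ^ d)"
    using mem_cint_addr[OF assms] cint_descendant_subset by blast
qed

lemma addr_Suc_div2:
  assumes "x \<in> cantor_set N" shows "addr (Suc m) x div 2 = addr m x"
  using addr_div_pow2[OF assms, of m 1] by simp

text \<open>If the ancestor of \<open>I\<^sub>k\<^sub>j\<close> at generation \<open>l\<close> is \<open>I\<^sub>l(x)\<close> but at generation \<open>l + 1\<close> is not
  \<open>I\<^sub>l\<^sub>+\<^sub>1(x)\<close>, then the centre of \<open>I\<^sub>l(x)\<close> separates \<open>x\<close> from \<open>z\<^sub>k\<^sub>j\<close> by at least \<open>gap l\<close>.\<close>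
lemma center_separation_at_branch:
  assumes x: "x \<in> cantor_set N" and j: "j < 2 ^ k" and l: "l \<le> k"
    and same: "j div 2 ^ (k - l) = addr l x"
    and branch: "l = k \<or> j div 2 ^ (k - Suc l) \<noteq> addr (Suc l) x"
  shows "(x \<le> ccenter N l (addr l x) \<and> ccenter N l (addr l x) \<le> ccenter N k j \<or>
          ccenter N k j \<le> ccenter N l (addr l x) \<and> ccenter N l (addr l x) \<le> x)
         \<and> gap l \<le> \<bar>x - ccenter N k j\<bar>"
proof -
  define P P' where "P = addr l x" and "P' = addr (Suc l) x"
  have xP': "x \<in> cint N (Suc l) P'" using mem_cint_addr[OF x] P'_def by blast
  have P'P: "P' div 2 = P" using addr_Suc_div2[OF x] P_def P'_def by simp
  show ?thesis
  proof (cases "l = k")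
    case True
    then have "j = P" using same P_def by simp
    moreover have "P' = 2 * P \<or> P' = 2 * P + 1" using parity_cases[of P'] P'P by simp
    then have "x + gap l \<le> ccenter N l P \<or> ccenter N l P + gap l \<le> x"
      using xP' left_child_gap[of x l P] right_child_gap[of x l P] by auto
    ultimately show ?thesis using True gap_pos[of l] P_def by auto
  next
    case False
    define q where "q = j div 2 ^ (k - Suc l)"
    have "k = Suc l + (k - Suc l)" using l False by simp
    then have "ccenter N k j \<in> cint N (Suc l) q"
      using ccenter_in_cint[of k j] cint_descendant_subset[of "Suc l" "k - Suc l" j] q_def by (metis subsetD)
    moreover have "q div 2 = P"
    proof -
      have "2 ^ (k - Suc l) * 2 = (2::nat) ^ (k - l)" using l False
        by (metis Suc_diff_Suc le_neq_implies_less power_Suc2)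
      moreover have "q div 2 = j div (2 ^ (k - Suc l) * 2)" by (simp add: q_def div_mult2_eq)
      ultimately show ?thesis using same P_def by (simp only:)
    qed
    moreover have "q \<noteq> P'" using branch False q_def P'_def by simp
    ultimately show ?thesis
      using children_separation[of "ccenter N k j" l q x P'] xP' P'P gap_pos[of l] P_def by auto
  qed
qed

lemma ccenter_inj:
  assumes "j < 2 ^ k" "j' < 2 ^ k'" "ccenter N k j = ccenter N k' j'"
  shows "k = k' \<and> j = j'"
proof -
  have "k = k' \<and> j = j'" if "j < 2 ^ k" "j' < 2 ^ k'" "k \<le> k'" "ccenter N k j = ccenter N k' j'"
    for k j k' j'
  proof -
    define d where "d = k' - k"
    have k': "k' = k + d" using that(3) d_def by simp
    have "ccenter N k j \<in> cint N k (j' div 2 ^ d)"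
      using that(4) ccenter_in_cint[of k' j'] cint_descendant_subset[of k d j'] k' by auto
    moreover have "j' div 2 ^ d < 2 ^ k" using that(2) k' by (simp add: div_pow2_less)
    ultimately have jj: "j' div 2 ^ d = j"
      using that(1) addr_unique ccenter_in_cint[of k j] by metis
    show ?thesis
    proof (cases d)
      case (Suc e)
      define q where "q = j' div 2 ^ e"
      have "ccenter N k' j' \<in> cint N (Suc k) q"
        using ccenter_in_cint[of k' j'] cint_descendant_subset[of "Suc k" e j'] k' Suc q_def by auto
      moreover have "q div 2 = j" using jj Suc q_def by (metis div_mult2_eq power_Suc2)
      ultimately have "q = 2 * j \<or> q = 2 * j + 1" "ccenter N k' j' \<in> cint N (Suc k) q"
        using parity_cases[of q] by simp_all
      then have "ccenter N k' j' + gap k \<le> ccenter N k j \<or> ccenter N k j + gap k \<le> ccenter N k' j'"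
        using left_child_gap[of _ k j] right_child_gap[of _ k j] by auto
      then show ?thesis using that(4) gap_pos[of k] by auto
    qed (use jj k' in simp)
  qed
  from this[OF assms(1,2) _ assms(3)] this[OF assms(2,1) _ assms(3)[symmetric]]
  show ?thesis by linarith
qed

lemma closed_cint: "closed (cint N k j)" unfolding cint_def by simp

lemma closed_cantor_set: "closed (cantor_set N)"
  unfolding cantor_set_def using closed_cint by (intro closed_INT closed_UN) auto

lemma cantor_set_subset_cint_0: "cantor_set N \<subseteq> cint N 0 0"
  using mem_cint_addr[of _ 0] addr_less[of _ 0] by auto

definition min_share :: real where "min_share = (1 - 1 / real N) / 2"

lemma min_share_bounds:
  "0 < min_share" "min_share \<le> 1/2" "min_share \<le> (1 + 1 / real N) / 2"
  using real_N_ge unfolding min_share_def by (auto simp: field_simps)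

lemma descendant_ratio_bounds:
  "0 \<le> 2 / (real N ^ 2 * min_share)" "2 / (real N ^ 2 * min_share) \<le> 1/60"
  "1/3 \<le> (1/2 - 1 / real N) * (1 - 2 / (real N ^ 2 * min_share))"
proof -
  have r: "2 / (real N ^ 2 * min_share) = 4 / (real N * (real N - 1))"
    using real_N_ge unfolding min_share_def by (simp add: field_simps power2_eq_square)
  have "real N * (real N - 1) \<ge> 16 * 15" using real_N_ge by (intro mult_mono) auto
  then have r60: "4 / (real N * (real N - 1)) \<le> 1/60" "0 \<le> 4 / (real N * (real N - 1))"
    by (auto simp: field_simps)
  then show "0 \<le> 2 / (real N ^ 2 * min_share)" "2 / (real N ^ 2 * min_share) \<le> 1/60"
    unfolding r by simp_all
  have "(7/16) * (59/60) \<le> (1/2 - 1 / real N) * (1 - 4 / (real N * (real N - 1)))"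
    using real_N_ge r60 by (intro mult_mono) (auto simp: field_simps)
  then show "1/3 \<le> (1/2 - 1 / real N) * (1 - 2 / (real N ^ 2 * min_share))" unfolding r by simp
qed

end

locale redist_cantor_measure = cantor_geometry +
  fixes W :: "real measure"
  assumes redist: "redist_cantor N W"
begin

definition mass :: "nat \<Rightarrow> nat \<Rightarrow> real" where "mass k j = measure W (cint N k j)"

lemma sets_W: "sets W = sets borel" using redist unfolding redist_cantor_def by simp

lemma space_W: "space W = UNIV" using sets_eq_imp_space_eq[OF sets_W] by simp

lemma finite_measure_W: "finite_measure W"
  using redist space_W unfolding redist_cantor_def by (intro finite_measureI) auto

lemma cint_measurable[measurable]: "cint N k j \<in> sets W"
  using sets_W closed_cint by (simp add: borel_closed)

lemma interval_measurable: "interval I \<Longrightarrow> I \<in> sets W"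
  using sets_W real_interval_borel_measurable unfolding interval_def by simp

lemma emeasure_cint: "emeasure W (cint N k j) = ennreal (mass k j)"
  unfolding mass_def using finite_measure.emeasure_eq_measure[OF finite_measure_W] by simp

lemma mass_nonneg: "mass k j \<ge> 0" unfolding mass_def by simp

lemma null_outside_cantor_set: "UNIV - cantor_set N \<in> null_sets W"
  using redist closed_cantor_set sets_W space_W
  unfolding redist_cantor_def null_sets_def by (auto simp: borel_closed)

lemma AE_cantor_set: "AE x in W. x \<in> cantor_set N"
  using null_outside_cantor_set by (rule AE_I') (auto simp: space_W)

lemma mass_root: "mass 0 0 = 1"
proof -
  have "AE x in W. x \<in> cint N 0 0" using AE_cantor_set cantor_set_subset_cint_0 by auto
  then have "emeasure W (cint N 0 0) = emeasure W (space W)"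
    by (intro emeasure_eq_AE) (use sets.top[of W] in \<open>auto simp: space_W\<close>)
  then show ?thesis using redist emeasure_cint[of 0 0] space_W by (simp add: redist_cantor_def)
qed

lemma mass_children_ge:
  assumes "j < 2 ^ k"
  shows "mass (Suc k) (2 * j) \<ge> min_share * mass k j \<and> mass (Suc k) (2 * j + 1) \<ge> min_share * mass k j"
proof (cases k)
  case 0
  then have "j = 0" using assms by simp
  moreover have "mass 1 0 = 1/2" "mass 1 1 = 1/2" using redist unfolding redist_cantor_def mass_def by auto
  ultimately show ?thesis using 0 mass_root min_share_bounds by simp
next
  case (Suc k')
  then have "k \<ge> 1" by simp
  with redist assms have
    "(even j \<longrightarrow> mass (Suc k) (2 * j) = (1 + 1 / real N) / 2 * mass k j \<and>
                  mass (Suc k) (2 * j + 1) = min_share * mass k j) \<and>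
     (odd j \<longrightarrow> mass (Suc k) (2 * j) = min_share * mass k j \<and>
                 mass (Suc k) (2 * j + 1) = (1 + 1 / real N) / 2 * mass k j)"
    unfolding redist_cantor_def mass_def min_share_def by blast
  moreover have "min_share * mass k j \<le> (1 + 1 / real N) / 2 * mass k j"
    using min_share_bounds mass_nonneg by (intro mult_right_mono)
  ultimately show ?thesis by (cases "even j") auto
qed

lemma mass_child_ge:
  assumes "j < 2 ^ Suc k" shows "mass (Suc k) j \<ge> min_share * mass k (j div 2)"
  using mass_children_ge[of "j div 2" k] assms parity_cases[of j] by (cases "j = 2 * (j div 2)") auto

lemma mass_pos: "j < 2 ^ k \<Longrightarrow> mass k j > 0"
proof (induction k arbitrary: j)
  case (Suc k)
  have "min_share * mass k (j div 2) > 0" using Suc min_share_bounds by simp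
  then show ?case using mass_child_ge[OF Suc.prems] by linarith
qed (simp add: mass_root)

lemma mass_descendant_ge:
  "j < 2 ^ (m + d) \<Longrightarrow> mass (m + d) j \<ge> min_share ^ d * mass m (j div 2 ^ d)"
proof (induction d arbitrary: j)
  case (Suc d)
  have "min_share ^ Suc d * mass m (j div 2 ^ Suc d) = min_share * (min_share ^ d * mass m (j div 2 div 2 ^ d))"
    by (simp add: div_mult2_eq)
  also have "\<dots> \<le> min_share * mass (m + d) (j div 2)"
    using Suc min_share_bounds by (simp add: mult_left_mono)
  also have "\<dots> \<le> mass (m + Suc d) j" using mass_child_ge[of j "m + d"] Suc.prems by simp
  finally show ?case .
qed simp

abbreviation sw :: "nat \<Rightarrow> nat \<Rightarrow> real" where "sw \<equiv> sweight N W"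

lemma sweight_eq: "sw k j = (1 / real N ^ k)\<^sup>2 / mass k j"
  unfolding sweight_def mass_def by (simp add: power_mult power2_eq_square power_mult_distrib)

lemma sweight_nonneg: "sw k j \<ge> 0" unfolding sweight_eq using mass_nonneg by simp

lemma sweight_descendant_le:
  assumes "j < 2 ^ (m + d)"
  shows "sw (m + d) j \<le> sw m (j div 2 ^ d) * (1 / (real N ^ 2 * min_share)) ^ d"
proof -
  define P where "P = j div 2 ^ d"
  have mP: "mass m P > 0" using mass_pos div_pow2_less assms P_def by blast
  have "sw (m + d) j = (1 / real N ^ (m + d))\<^sup>2 / mass (m + d) j" by (rule sweight_eq)
  also have "\<dots> \<le> (1 / real N ^ (m + d))\<^sup>2 / (min_share ^ d * mass m P)"
    using mass_descendant_ge[OF assms] mass_pos[OF assms] mP min_share_bounds P_def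
    by (intro divide_left_mono) auto
  also have "\<dots> = sw m P * (1 / (real N ^ 2 * min_share)) ^ d"
    using real_N_ge mP min_share_bounds
    by (simp add: sweight_eq field_simps power_add power_mult_distrib power2_eq_square)
  finally show ?thesis using P_def by simp
qed

lemma ccenter_eq_iff:
  assumes "j0 < 2 ^ k0" "j < 2 ^ k"
  shows "ccenter N k j = ccenter N k0 j0 \<longleftrightarrow> k = k0 \<and> j = j0"
  using ccenter_inj[OF assms(2,1)] by auto

lemma sdot_density_eq:
  "infsum (\<lambda>(k, j). ennreal (sw k j)) {(k, j) \<in> cidx. ccenter N k j = x} * g x
   = (\<Sum>k. \<Sum>j<2 ^ k. ennreal (sw k j) * g (ccenter N k j) * indicator {ccenter N k j} x)"
proof (cases "\<exists>k0 j0. j0 < 2 ^ k0 \<and> ccenter N k0 j0 = x")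
  case True
  then obtain k0 j0 where kj: "j0 < 2 ^ k0" "x = ccenter N k0 j0" by metis
  then have "{(k, j) \<in> cidx. ccenter N k j = x} = {(k0, j0)}"
    using ccenter_eq_iff unfolding cidx_def by auto
  moreover have "(\<Sum>j<2 ^ k. ennreal (sw k j) * g (ccenter N k j) * indicator {ccenter N k j} x)
      = (if k = k0 then ennreal (sw k0 j0) * g x else 0)" for k
  proof -
    have "(\<Sum>j<2 ^ k. ennreal (sw k j) * g (ccenter N k j) * indicator {ccenter N k j} x)
        = (\<Sum>j<2 ^ k. if k = k0 \<and> j = j0 then ennreal (sw k0 j0) * g x else 0)"
    proof (rule sum.cong)
      fix j :: nat assume "j \<in> {..<2 ^ k}"
      then show "ennreal (sw k j) * g (ccenter N k j) * indicator {ccenter N k j} x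
          = (if k = k0 \<and> j = j0 then ennreal (sw k0 j0) * g x else 0)"
        using ccenter_eq_iff[OF kj(1), of j k] kj(2) by (auto simp: indicator_def)
    qed simp
    then show ?thesis using kj(1) by (cases "k = k0") simp_all
  qed
  ultimately show ?thesis using sums_unique[OF sums_single[of k0]] by simp
next
  case False
  then have "{(k, j) \<in> cidx. ccenter N k j = x} = {}" unfolding cidx_def by auto
  moreover have "(\<Sum>j<2 ^ k. ennreal (sw k j) * g (ccenter N k j) * indicator {ccenter N k j} x) = 0" for k
    using False by (intro sum.neutral) (auto simp: indicator_def)
  ultimately show ?thesis by (simp only: infsum_empty mult_zero_left suminf_zero)
qed

lemma nn_integral_sdot: "(\<integral>\<^sup>+ x. g x \<partial>sdot N W) = (\<Sum>k. \<Sum>j<2 ^ k. ennreal (sw k j) * g (ccenter N k j))"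
proof -
  have "(\<integral>\<^sup>+ x. g x \<partial>sdot N W) = (\<integral>\<^sup>+ x. (\<Sum>k. \<Sum>j<2 ^ k.
      ennreal (sw k j) * g (ccenter N k j) * indicator {ccenter N k j} x) \<partial>count_space UNIV)"
    unfolding sdot_def by (simp add: nn_integral_density sdot_density_eq)
  also have "\<dots> = (\<Sum>k. \<integral>\<^sup>+ x. (\<Sum>j<2 ^ k.
      ennreal (sw k j) * g (ccenter N k j) * indicator {ccenter N k j} x) \<partial>count_space UNIV)"
    by (rule nn_integral_suminf) auto
  also have "\<dots> = (\<Sum>k. \<Sum>j<2 ^ k. \<integral>\<^sup>+ x.
      ennreal (sw k j) * g (ccenter N k j) * indicator {ccenter N k j} x \<partial>count_space UNIV)"
    by (subst nn_integral_sum) auto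
  finally show ?thesis by (subst (asm) nn_integral_cmult_indicator) auto
qed

lemma nn_integral_restr_sdot:
  "(\<integral>\<^sup>+ x. g x \<partial>restr (sdot N W) Q) = (\<integral>\<^sup>+ x. indicator Q x * g x \<partial>sdot N W)"
  unfolding restr_def by (rule nn_integral_density) (auto simp: sdot_def)

lemma emeasure_restr_sdot:
  "emeasure (restr (sdot N W) Q) J = (\<Sum>k. \<Sum>j<2 ^ k. ennreal (sw k j) * indicator (Q \<inter> J) (ccenter N k j))"
proof -
  have "emeasure (restr (sdot N W) Q) J = (\<integral>\<^sup>+ x. indicator J x \<partial>restr (sdot N W) Q)"
    by (simp add: sdot_def restr_def)
  also have "\<dots> = (\<integral>\<^sup>+ x. indicator (Q \<inter> J) x \<partial>sdot N W)"
    unfolding nn_integral_restr_sdot by (rule nn_integral_cong) (auto simp: indicator_def)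
  finally show ?thesis by (simp add: nn_integral_sdot)
qed

lemma emeasure_sdot: "emeasure (sdot N W) Q = (\<Sum>k. \<Sum>j<2 ^ k. ennreal (sw k j) * indicator Q (ccenter N k j))"
proof -
  have "emeasure (sdot N W) Q = (\<integral>\<^sup>+ x. indicator Q x \<partial>sdot N W)"
    by (simp add: sdot_def)
  then show ?thesis by (simp add: nn_integral_sdot)
qed

definition inv_density :: "nat \<Rightarrow> nat \<Rightarrow> real" where
  "inv_density k j = (1 / real N ^ k) / mass k j"

lemma inv_density_nonneg: "inv_density k j \<ge> 0"
  unfolding inv_density_def using mass_nonneg by simp

definition potential :: "real set \<Rightarrow> real \<Rightarrow> ennreal" where
  "potential Q x = (\<Sum>k. \<Sum>j<2 ^ k.
     ennreal (sw k j) * (indicator Q (ccenter N k j) * ennreal (1 / \<bar>x - ccenter N k j\<bar>)))"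

definition square_fn :: "real set \<Rightarrow> real \<Rightarrow> ennreal" where
  "square_fn Q x = (\<Sum>k. \<Sum>j<2 ^ k.
     ennreal ((inv_density k j)\<^sup>2) * indicator Q (ccenter N k j) * indicator (cint N k j) x)"

lemma square_fn_measurable[measurable]: "square_fn Q \<in> borel_measurable W"
  unfolding square_fn_def by measurable

lemma nn_integral_square_fn: "(\<integral>\<^sup>+ x. square_fn Q x \<partial>W) = emeasure (sdot N W) Q"
proof -
  have "(\<integral>\<^sup>+ x. square_fn Q x \<partial>W) = (\<Sum>k. \<Sum>j<2 ^ k.
      ennreal ((inv_density k j)\<^sup>2) * indicator Q (ccenter N k j) * ennreal (mass k j))"
    unfolding square_fn_def
    by (subst nn_integral_suminf, measurable, subst nn_integral_sum, simp,
        subst nn_integral_cmult_indicator) (auto simp: emeasure_cint)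
  also have "\<dots> = (\<Sum>k. \<Sum>j<2 ^ k. ennreal (sw k j) * indicator Q (ccenter N k j))"
  proof (intro suminf_cong sum.cong refl)
    fix k j assume "j \<in> {..<(2::nat) ^ k}"
    then have p: "mass k j > 0" using mass_pos by simp
    then have "(inv_density k j)\<^sup>2 * mass k j = sw k j"
      unfolding inv_density_def sweight_eq by (simp add: power2_eq_square field_simps)
    then have "ennreal ((inv_density k j)\<^sup>2) * ennreal (mass k j) = ennreal (sw k j)"
      using p by (simp add: ennreal_mult[symmetric])
    then show "ennreal ((inv_density k j)\<^sup>2) * indicator Q (ccenter N k j) * ennreal (mass k j)
        = ennreal (sw k j) * indicator Q (ccenter N k j)"
      by (metis mult.commute mult.left_commute)
  qed
  finally show ?thesis by (simp add: emeasure_sdot)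
qed

context
  fixes x :: real
  assumes x_cantor: "x \<in> cantor_set N"
begin

text \<open>The last generation at which the ancestor of \<open>I\<^sub>k\<^sub>j\<close> is the Cantor interval containing \<open>x\<close>.\<close>
definition branch_level :: "nat \<Rightarrow> nat \<Rightarrow> nat" where
  "branch_level k j = Max {m. m \<le> k \<and> j div 2 ^ (k - m) = addr m x}"

lemma branch_level:
  assumes "j < 2 ^ k"
  shows "branch_level k j \<le> k" "j div 2 ^ (k - branch_level k j) = addr (branch_level k j) x"
    "branch_level k j = k \<or> j div 2 ^ (k - Suc (branch_level k j)) \<noteq> addr (Suc (branch_level k j)) x"
proof -
  define S where "S = {m. m \<le> k \<and> j div 2 ^ (k - m) = addr m x}"
  have fin: "finite S" unfolding S_def by auto
  have "0 \<in> S" using assms addr_less[OF x_cantor, of 0] unfolding S_def by simp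
  then have l: "branch_level k j \<in> S" unfolding branch_level_def S_def[symmetric] using Max_in[OF fin] by auto
  then show "branch_level k j \<le> k" "j div 2 ^ (k - branch_level k j) = addr (branch_level k j) x"
    unfolding S_def by auto
  have "Suc (branch_level k j) \<notin> S"
    using Max_ge[OF fin] unfolding branch_level_def S_def[symmetric] by fastforce
  then show "branch_level k j = k \<or> j div 2 ^ (k - Suc (branch_level k j)) \<noteq> addr (Suc (branch_level k j)) x"
    using l unfolding S_def by auto
qed

lemma ccenter_ne:
  assumes "j < 2 ^ k" shows "x \<noteq> ccenter N k j"
proof -
  have "gap (branch_level k j) \<le> \<bar>x - ccenter N k j\<bar>"
    using center_separation_at_branch[OF x_cantor assms branch_level[OF assms]] by simp
  then show ?thesis using gap_pos[of "branch_level k j"] by auto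
qed

definition branch_weight :: "nat \<Rightarrow> nat \<Rightarrow> nat \<Rightarrow> real" where
  "branch_weight m k j = (if m \<le> k \<and> j div 2 ^ (k - m) = addr m x then sw k j / gap m else 0)"

lemma branch_weight_nonneg: "branch_weight m k j \<ge> 0"
  unfolding branch_weight_def using sweight_nonneg gap_pos[of m] by simp

lemma potential_term_le:
  assumes "is_interval Q" "x \<in> Q" "j < 2 ^ k"
  shows "ennreal (sw k j) * (indicator Q (ccenter N k j) * ennreal (1 / \<bar>x - ccenter N k j\<bar>))
    \<le> (\<Sum>m. indicator Q (ccenter N m (addr m x)) * ennreal (branch_weight m k j))"
proof -
  define l where "l = branch_level k j"
  note L = branch_level[OF assms(3), folded l_def]
  note sep = center_separation_at_branch[OF x_cantor assms(3) L]
  have "ennreal (sw k j) * (indicator Q (ccenter N k j) * ennreal (1 / \<bar>x - ccenter N k j\<bar>))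
      \<le> indicator Q (ccenter N l (addr l x)) * ennreal (branch_weight l k j)"
  proof (cases "ccenter N k j \<in> Q")
    case True
    have "ccenter N l (addr l x) \<in> Q" using sep True assms(1,2) unfolding is_interval_1 by blast
    moreover have "sw k j * (1 / \<bar>x - ccenter N k j\<bar>) \<le> sw k j / gap l"
      using sep gap_pos[of l] sweight_nonneg[of k j] by (simp add: divide_simps mult_left_mono)
    ultimately show ?thesis using True L(1,2) sweight_nonneg[of k j]
      unfolding branch_weight_def by (simp add: ennreal_mult[symmetric] ennreal_leI)
  qed simp
  also have "\<dots> \<le> (\<Sum>m. indicator Q (ccenter N m (addr m x)) * ennreal (branch_weight m k j))"
    using sum_le_suminf[OF summableI, of "{l}"] by simp
  finally show ?thesis .
qed

text \<open>The ratio counts the \<open>2\<^sup>k\<^sup>-\<^sup>m\<close> descendants of \<open>I\<^sub>m(x)\<close> in generation \<open>k\<close>, each of weight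
  at most \<open>(N\<^sup>2 min_share)\<^sup>-\<^sup>(\<^sup>k\<^sup>-\<^sup>m\<^sup>)\<close> times that of \<open>I\<^sub>m(x)\<close>.\<close>
lemma sum_branch_weight_le:
  "(\<Sum>j<2 ^ k. branch_weight m k j) \<le>
   (if m \<le> k then sw m (addr m x) / gap m * (2 / (real N ^ 2 * min_share)) ^ (k - m) else 0)"
proof (cases "m \<le> k")
  case True
  define d P q where "d = k - m" and "P = addr m x" and "q = 1 / (real N ^ 2 * min_share)"
  define F where "F = {j. j < 2 ^ (m + d) \<and> j div 2 ^ d = P}"
  have k: "k = m + d" using True d_def by simp
  have q0: "q \<ge> 0" unfolding q_def using min_share_bounds by simp
  have "(\<Sum>j<2 ^ k. branch_weight m k j) = (\<Sum>j\<in>F. sw (m + d) j / gap m)"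
    unfolding branch_weight_def k F_def P_def by (simp add: sum.If_cases Int_def conj_commute lessThan_def)
  also have "\<dots> \<le> (\<Sum>j\<in>F. sw m P / gap m * q ^ d)"
  proof (rule sum_mono)
    fix j assume "j \<in> F"
    then have "sw (m + d) j \<le> sw m P * q ^ d"
      using sweight_descendant_le unfolding F_def q_def by auto
    then show "sw (m + d) j / gap m \<le> sw m P / gap m * q ^ d"
      using gap_pos[of m] by (simp add: divide_right_mono field_simps)
  qed
  also have "\<dots> = card F * (sw m P / gap m * q ^ d)" by simp
  also have "\<dots> \<le> 2 ^ d * (sw m P / gap m * q ^ d)"
    using card_div_fiber_le[of m d P] sweight_nonneg[of m P] gap_pos[of m] q0 unfolding F_def
    by (intro mult_right_mono) (auto simp del: of_nat_power simp: of_nat_le_iff[symmetric])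
  also have "\<dots> = sw m P / gap m * (2 * q) ^ d" by (simp add: power_mult_distrib)
  finally show ?thesis using True unfolding d_def P_def q_def by simp
qed (simp add: branch_weight_def)

lemma suminf_branch_weight_le:
  "(\<Sum>k. ennreal (\<Sum>j<2 ^ k. branch_weight m k j)) \<le> ennreal (3 * inv_density m (addr m x))"
proof -
  define P r V where "P = addr m x" and "r = 2 / (real N ^ 2 * min_share)" and "V = sw m P / gap m"
  have mP: "mass m P > 0" using mass_pos addr_less[OF x_cantor] P_def by blast
  have V0: "V \<ge> 0" unfolding V_def using sweight_nonneg gap_pos[of m] by simp
  have r: "0 \<le> r" "r < 1" "1/3 \<le> (1/2 - 1 / real N) * (1 - r)"
    using descendant_ratio_bounds unfolding r_def by auto
  have pos: "0 < (1/2 - 1 / real N) * (1 - r)" by (rule less_le_trans[OF _ r(3)]) simp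
  have "(\<Sum>k. ennreal (\<Sum>j<2 ^ k. branch_weight m k j)) \<le> (\<Sum>k. ennreal (if m \<le> k then V * r ^ (k - m) else 0))"
    using sum_branch_weight_le unfolding V_def r_def P_def by (intro suminf_le ennreal_leI) auto
  also have "\<dots> = (\<Sum>d. ennreal (V * r ^ d))"
    by (subst suminf_shift_ennreal[of m]) auto
  also have "\<dots> = ennreal (V / (1 - r))"
    using V0 r by (intro suminf_geometric_ennreal) auto
  also have "\<dots> \<le> ennreal (3 * inv_density m P)"
  proof (rule ennreal_leI)
    have "V = inv_density m P / (1/2 - 1 / real N)"
      unfolding V_def gap_def sweight_eq inv_density_def using real_N_ge mP
      by (simp add: field_simps power2_eq_square)
    then have "V / (1 - r) = inv_density m P / ((1/2 - 1 / real N) * (1 - r))" by simp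
    also have "\<dots> \<le> inv_density m P / (1/3)"
      using pos inv_density_nonneg by (intro divide_left_mono) (use r in auto)
    finally show "V / (1 - r) \<le> 3 * inv_density m P" by simp
  qed
  finally show ?thesis unfolding P_def .
qed

lemma potential_le_branch_sum:
  assumes "is_interval Q" "x \<in> Q"
  shows "potential Q x \<le> (\<Sum>m. indicator Q (ccenter N m (addr m x)) * ennreal (3 * inv_density m (addr m x)))"
proof -
  have "potential Q x \<le> (\<Sum>k. \<Sum>j<2 ^ k. \<Sum>m. indicator Q (ccenter N m (addr m x)) * ennreal (branch_weight m k j))"
    unfolding potential_def using potential_term_le[OF assms] by (intro suminf_le sum_mono) auto
  also have "\<dots> = (\<Sum>k. \<Sum>m. \<Sum>j<2 ^ k. indicator Q (ccenter N m (addr m x)) * ennreal (branch_weight m k j))"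
    by (subst suminf_sum) auto
  also have "\<dots> = (\<Sum>m. \<Sum>k. \<Sum>j<2 ^ k. indicator Q (ccenter N m (addr m x)) * ennreal (branch_weight m k j))"
    by (rule suminf_comm_ennreal)
  also have "\<dots> = (\<Sum>m. indicator Q (ccenter N m (addr m x)) * (\<Sum>k. ennreal (\<Sum>j<2 ^ k. branch_weight m k j)))"
    by (simp add: sum_distrib_left[symmetric] sum_ennreal branch_weight_nonneg)
  also have "\<dots> \<le> (\<Sum>m. indicator Q (ccenter N m (addr m x)) * ennreal (3 * inv_density m (addr m x)))"
    by (intro suminf_le mult_left_mono suminf_branch_weight_le) auto
  finally show ?thesis .
qed

lemma inv_density_addr_Suc_le: "inv_density (Suc m) (addr (Suc m) x) \<le> 2/15 * inv_density m (addr m x)"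
proof -
  define P P' where "P = addr m x" and "P' = addr (Suc m) x"
  have mP: "mass m P > 0" using mass_pos addr_less[OF x_cantor] P_def by blast
  have "mass (Suc m) P' \<ge> min_share * mass m P"
    using mass_child_ge addr_less[OF x_cantor] addr_Suc_div2[OF x_cantor] P_def P'_def by metis
  moreover have "mass (Suc m) P' > 0" using mass_pos addr_less[OF x_cantor] P'_def by blast
  ultimately have "inv_density (Suc m) P' \<le> (1 / real N ^ Suc m) / (min_share * mass m P)"
    unfolding inv_density_def using mP min_share_bounds by (intro divide_left_mono) auto
  also have "\<dots> = 2 / (real N - 1) * inv_density m P"
    unfolding inv_density_def min_share_def using real_N_ge mP by (simp add: field_simps)
  also have "\<dots> \<le> 2/15 * inv_density m P"
    using inv_density_nonneg[of m P] real_N_ge by (intro mult_right_mono) (auto simp: field_simps)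
  finally show ?thesis unfolding P_def P'_def .
qed

lemma inv_density_addr_le: "inv_density (m + d) (addr (m + d) x) \<le> (2/15) ^ d * inv_density m (addr m x)"
proof (induction d)
  case (Suc d)
  have "inv_density (m + Suc d) (addr (m + Suc d) x) \<le> 2/15 * inv_density (m + d) (addr (m + d) x)"
    using inv_density_addr_Suc_le[of "m + d"] by simp
  also have "\<dots> \<le> 2/15 * ((2/15) ^ d * inv_density m (addr m x))"
    using Suc.IH by (intro mult_left_mono) auto
  finally show ?case by simp
qed simp

lemma potential_le_first_branch:
  assumes "is_interval Q" "x \<in> Q" and first: "\<And>m. m < m0 \<Longrightarrow> ccenter N m (addr m x) \<notin> Q"
  shows "potential Q x \<le> ennreal (4 * inv_density m0 (addr m0 x))"
proof -
  define A where "A = inv_density m0 (addr m0 x)"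
  have A0: "A \<ge> 0" unfolding A_def by (rule inv_density_nonneg)
  have "potential Q x \<le> (\<Sum>m. indicator Q (ccenter N m (addr m x)) * ennreal (3 * inv_density m (addr m x)))"
    by (rule potential_le_branch_sum[OF assms(1,2)])
  also have "\<dots> \<le> (\<Sum>m. ennreal (if m0 \<le> m then 3 * A * (2/15) ^ (m - m0) else 0))"
  proof (intro suminf_le)
    fix m
    show "indicator Q (ccenter N m (addr m x)) * ennreal (3 * inv_density m (addr m x))
        \<le> ennreal (if m0 \<le> m then 3 * A * (2/15) ^ (m - m0) else 0)"
    proof (cases "m0 \<le> m")
      case True
      then have "inv_density m (addr m x) \<le> (2/15) ^ (m - m0) * A"
        using inv_density_addr_le[of m0 "m - m0"] unfolding A_def by simp
      then show ?thesis using True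
        by (auto simp: indicator_def mult.commute intro!: ennreal_leI)
    next
      case False
      then show ?thesis using first[of m] by simp
    qed
  qed auto
  also have "\<dots> = (\<Sum>d. ennreal (3 * A * (2/15) ^ d))"
    by (subst suminf_shift_ennreal[of m0]) auto
  also have "\<dots> = ennreal (3 * A / (1 - 2/15))"
    by (rule suminf_geometric_ennreal) (use A0 in auto)
  also have "\<dots> \<le> ennreal (4 * A)" using A0 by (intro ennreal_leI) simp
  finally show ?thesis unfolding A_def .
qed

lemma inv_density_sq_le_square_fn:
  assumes "ccenter N m (addr m x) \<in> Q"
  shows "ennreal ((inv_density m (addr m x))\<^sup>2) \<le> square_fn Q x"
proof -
  have p: "addr m x < 2 ^ m" "x \<in> cint N m (addr m x)" using addr_less mem_cint_addr x_cantor by auto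
  have "ennreal ((inv_density m (addr m x))\<^sup>2) = ennreal ((inv_density m (addr m x))\<^sup>2)
      * indicator Q (ccenter N m (addr m x)) * indicator (cint N m (addr m x)) x"
    using assms p by simp
  also have "\<dots> \<le> (\<Sum>j<2 ^ m. ennreal ((inv_density m j)\<^sup>2) * indicator Q (ccenter N m j) * indicator (cint N m j) x)"
    using p by (intro member_le_sum) auto
  also have "\<dots> \<le> square_fn Q x"
    unfolding square_fn_def using sum_le_suminf[OF summableI, of "{m}"] by simp
  finally show ?thesis .
qed

lemma potential_sq_le_square_fn:
  assumes "is_interval Q" "x \<in> Q"
  shows "(potential Q x)\<^sup>2 \<le> 16 * square_fn Q x"
proof (cases "\<exists>m. ccenter N m (addr m x) \<in> Q")
  case True
  then obtain m0 where m0: "ccenter N m0 (addr m0 x) \<in> Q" "\<And>m. m < m0 \<Longrightarrow> ccenter N m (addr m x) \<notin> Q"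
    using exists_least_iff[of "\<lambda>m. ccenter N m (addr m x) \<in> Q"] by auto
  define A where "A = inv_density m0 (addr m0 x)"
  have "(potential Q x)\<^sup>2 \<le> (ennreal (4 * A))\<^sup>2"
    using potential_le_first_branch[OF assms m0(2)] unfolding A_def by (intro power_mono) auto
  also have "\<dots> = 16 * ennreal (A\<^sup>2)"
    using inv_density_nonneg unfolding A_def by (simp add: ennreal_power[symmetric] power_mult_distrib ennreal_mult)
  also have "\<dots> \<le> 16 * square_fn Q x"
    using inv_density_sq_le_square_fn[OF m0(1)] unfolding A_def by (intro mult_left_mono) auto
  finally show ?thesis .
next
  case False
  then have "potential Q x \<le> 0" using potential_le_branch_sum[OF assms] by simp
  then show ?thesis by simp
qed

lemma maxfn_le_potential:
  assumes "x \<in> Q"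
  shows "maxfn (restr (sdot N W) Q) x \<le> potential Q x"
  unfolding maxfn_def
proof (rule SUP_least)
  fix J assume "J \<in> {J. interval J \<and> x \<in> J \<and> ilen J > 0}"
  then have J: "interval J" "x \<in> J" "ilen J > 0" by auto
  have "emeasure (restr (sdot N W) Q) J / ennreal (ilen J)
     = (\<Sum>k. \<Sum>j<2 ^ k. ennreal (sw k j) * indicator (Q \<inter> J) (ccenter N k j) / ennreal (ilen J))"
    by (simp only: emeasure_restr_sdot ennreal_suminf_divide[symmetric] sum_divide_ennreal)
  also have "\<dots> \<le> potential Q x"
    unfolding potential_def
  proof (intro suminf_le sum_mono)
    fix k j assume "j \<in> {..<(2::nat) ^ k}"
    then have d: "0 < \<bar>x - ccenter N k j\<bar>" using ccenter_ne by simp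
    show "ennreal (sw k j) * indicator (Q \<inter> J) (ccenter N k j) / ennreal (ilen J)
       \<le> ennreal (sw k j) * (indicator Q (ccenter N k j) * ennreal (1 / \<bar>x - ccenter N k j\<bar>))"
    proof (cases "ccenter N k j \<in> Q \<inter> J")
      case True
      have "sw k j / ilen J \<le> sw k j * (1 / \<bar>x - ccenter N k j\<bar>)"
        using dist_le_ilen[OF J(1,2)] True d J(3) sweight_nonneg[of k j] by (simp add: divide_left_mono)
      then show ?thesis using True J(3) sweight_nonneg[of k j]
        by (simp add: divide_ennreal ennreal_mult[symmetric] ennreal_leI)
    qed simp
  qed auto
  finally show "emeasure (restr (sdot N W) Q) J / ennreal (ilen J) \<le> potential Q x" .
qed

lemma poisson_le_potential:
  assumes "interval I" "x \<in> I"
  shows "poisson I (restr (sdot N W) Q) \<le> potential Q x"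
  unfolding poisson_def nn_integral_restr_sdot nn_integral_sdot potential_def
proof (intro suminf_le sum_mono mult_left_mono)
  fix k j :: nat assume "j \<in> {..<2 ^ k}"
  then show "ennreal (ilen I / (ilen I + infdist (ccenter N k j) I)\<^sup>2) \<le> ennreal (1 / \<bar>x - ccenter N k j\<bar>)"
    using poisson_kernel_le_inverse_dist[OF assms ccenter_ne] by (intro ennreal_leI) simp
qed auto

end

lemma nn_integral_maxfn_sq_le:
  assumes "interval Q"
  shows "(\<integral>\<^sup>+ x \<in> Q. (maxfn (restr (sdot N W) Q) x)\<^sup>2 \<partial>W) \<le> ennreal 16 * emeasure (sdot N W) Q"
proof -
  have Q: "is_interval Q" using assms unfolding interval_def by simp
  have "AE x in W. (maxfn (restr (sdot N W) Q) x)\<^sup>2 * indicator Q x \<le> 16 * square_fn Q x"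
    using AE_cantor_set
  proof (rule eventually_mono)
    fix x assume x: "x \<in> cantor_set N"
    show "(maxfn (restr (sdot N W) Q) x)\<^sup>2 * indicator Q x \<le> 16 * square_fn Q x"
    proof (cases "x \<in> Q")
      case True
      have "(maxfn (restr (sdot N W) Q) x)\<^sup>2 \<le> (potential Q x)\<^sup>2"
        using maxfn_le_potential[OF x True] by (intro power_mono) auto
      also have "\<dots> \<le> 16 * square_fn Q x" by (rule potential_sq_le_square_fn[OF x Q True])
      finally show ?thesis using True by simp
    qed simp
  qed
  then have "(\<integral>\<^sup>+ x \<in> Q. (maxfn (restr (sdot N W) Q) x)\<^sup>2 \<partial>W) \<le> (\<integral>\<^sup>+ x. 16 * square_fn Q x \<partial>W)"
    by (rule nn_integral_mono_AE)
  also have "\<dots> = ennreal 16 * emeasure (sdot N W) Q"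
    by (simp add: nn_integral_cmult nn_integral_square_fn)
  finally show ?thesis .
qed

lemma emeasure_mult_poisson_sq_le:
  assumes "interval I" "interval I0" "I \<subseteq> I0"
  shows "emeasure W I * (poisson I (restr (sdot N W) I0))\<^sup>2 \<le> (\<integral>\<^sup>+ x \<in> I. 16 * square_fn I0 x \<partial>W)"
proof -
  have "AE x in W. (poisson I (restr (sdot N W) I0))\<^sup>2 * indicator I x \<le> 16 * square_fn I0 x * indicator I x"
    using AE_cantor_set
  proof (rule eventually_mono)
    fix x assume x: "x \<in> cantor_set N"
    show "(poisson I (restr (sdot N W) I0))\<^sup>2 * indicator I x \<le> 16 * square_fn I0 x * indicator I x"
    proof (cases "x \<in> I")
      case True
      have "(poisson I (restr (sdot N W) I0))\<^sup>2 \<le> (potential I0 x)\<^sup>2"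
        using poisson_le_potential[OF x assms(1) True] by (intro power_mono) auto
      also have "\<dots> \<le> 16 * square_fn I0 x"
        using potential_sq_le_square_fn[OF x] assms True by (auto simp: interval_def)
      finally show ?thesis using True by simp
    qed simp
  qed
  then have "(\<integral>\<^sup>+ x \<in> I. (poisson I (restr (sdot N W) I0))\<^sup>2 \<partial>W) \<le> (\<integral>\<^sup>+ x \<in> I. 16 * square_fn I0 x \<partial>W)"
    by (rule nn_integral_mono_AE)
  moreover have "I \<in> sets W" using assms(1) by (rule interval_measurable)
  ultimately show ?thesis by (subst (asm) nn_integral_cmult_indicator) (simp_all add: mult.commute)
qed

lemma poisson_testing_le:
  assumes "interval I0" "\<forall>r\<ge>1. interval (I r)" "disjoint_family_on I {1..}" "I0 = (\<Union>r\<in>{1..}. I r)"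
  shows "infsum (\<lambda>r. emeasure W (I r) * (poisson (I r) (restr (sdot N W) I0))\<^sup>2) {1..}
         \<le> ennreal 16 * emeasure (sdot N W) I0"
proof -
  have "sum (\<lambda>r. emeasure W (I r) * (poisson (I r) (restr (sdot N W) I0))\<^sup>2) F
      \<le> (\<integral>\<^sup>+ x. 16 * square_fn I0 x \<partial>W)" if F: "finite F" "F \<subseteq> {1..}" for F
  proof -
    have "sum (\<lambda>r. emeasure W (I r) * (poisson (I r) (restr (sdot N W) I0))\<^sup>2) F
        \<le> (\<Sum>r\<in>F. \<integral>\<^sup>+ x \<in> I r. 16 * square_fn I0 x \<partial>W)"
      using F assms by (intro sum_mono emeasure_mult_poisson_sq_le) auto
    also have "\<dots> \<le> (\<integral>\<^sup>+ x. 16 * square_fn I0 x \<partial>W)"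
      using F assms interval_measurable
      by (intro sum_set_nn_integral_disjoint_le) (auto intro: disjoint_family_on_mono)
    finally show ?thesis .
  qed
  then have "infsum (\<lambda>r. emeasure W (I r) * (poisson (I r) (restr (sdot N W) I0))\<^sup>2) {1..}
      \<le> (\<integral>\<^sup>+ x. 16 * square_fn I0 x \<partial>W)"
    by (subst nonneg_infsum_complete) (auto intro!: SUP_least)
  also have "\<dots> = ennreal 16 * emeasure (sdot N W) I0"
    by (simp add: nn_integral_cmult nn_integral_square_fn)
  finally show ?thesis .
qed

end

theorem mainTheorem10:
  fixes N :: nat
  assumes "N \<ge> 16"
  shows "\<exists>C::real. \<forall>W. redist_cantor N W \<longrightarrow>
    (\<forall>Q. interval Q \<longrightarrow>
       (\<integral>\<^sup>+ x \<in> Q. (maxfn (restr (sdot N W) Q) x)\<^sup>2 \<partial>W)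
         \<le> ennreal C * emeasure (sdot N W) Q) \<and>
    (\<forall>I0 (I :: nat \<Rightarrow> real set).
       interval I0 \<and> (\<forall>r\<ge>1. interval (I r)) \<and> disjoint_family_on I {1..} \<and>
       I0 = (\<Union>r\<in>{1..}. I r) \<longrightarrow>
       infsum (\<lambda>r. emeasure W (I r) * (poisson (I r) (restr (sdot N W) I0))\<^sup>2) {1..}
         \<le> ennreal C * emeasure (sdot N W) I0)"
proof -
  have redist_measure: "redist_cantor_measure N W" if "redist_cantor N W" for W
    using assms that by unfold_locales
  show ?thesis
    by (intro exI[of _ 16] allI impI conjI)
      (blast intro: redist_cantor_measure.nn_integral_maxfn_sq_le[OF redist_measure],
       blast intro: redist_cantor_measure.poisson_testing_le[OF redist_measure])
qed

end
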